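(* For every integer $n\ge 0$ and every $\mathbf t\in\mathbb R^4_H$, $$D_n^H(\mathbf t)=\Theta_{n+1}(\mathbf t)-\Theta_n(\mathbf t),\qquad\text{where}\quad \Theta_n(\mathbf t):=\prod_{j=1}^4\frac{\sin \pi n t_j}{\sin \pi t_j}.$$
   Context: Let $\mathbb R^4_H=\{\mathbf t\in\mathbb R^4: t_1+t_2+t_3+t_4=0\}$ and $\mathbb Z^4_H=\mathbb Z^4\cap\mathbb R^4_H$. Let $\mathbb H=\{\mathbf k\in\mathbb Z^4_H: k_1\equiv k_2\equiv k_3\equiv k_4 \pmod 4\}$. For $n\ge 0$ let $\mathbb H_n^*=\{\mathbf k\in\mathbb H: -4n\le k_i-k_j\le 4n \text{ for all } 1\le i<j\le 4\}$, and define the Dirichlet kernel $D_n^H(\mathbf t)=\sum_{\mathbf k\in\mathbb H_n^*}e^{\frac{\pi i}{2}\mathbf k\cdot\mathbf t}$ for $\mathbf t\in\mathbb R^4_H$. The quotients $\frac{\sin\pi n t}{\sin \pi t}$ are understood as their continuous extensions at integer $t$. *)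

theory Defs
  imports "HOL-Analysis.Analysis"
begin

definition sin_quot :: "nat \<Rightarrow> real \<Rightarrow> real" where
  "sin_quot n t =
     (if sin (pi * t) \<noteq> 0 then sin (pi * real n * t) / sin (pi * t)
      else Lim (at t) (\<lambda>s. sin (pi * real n * s) / sin (pi * s)))"

definition Theta :: "nat \<Rightarrow> real^4 \<Rightarrow> real" where
  "Theta n t = (\<Prod>j\<in>UNIV. sin_quot n (t $ j))"

definition latH :: "(int^4) set" where
  "latH = {k. (\<Sum>j\<in>UNIV. k $ j) = 0 \<and> (\<forall>i j. k $ i mod 4 = k $ j mod 4)}"

definition latH_star :: "nat \<Rightarrow> (int^4) set" where
  "latH_star n = {k \<in> latH. \<forall>i j. - 4 * int n \<le> k $ i - k $ j \<and> k $ i - k $ j \<le> 4 * int n}"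

definition DH :: "nat \<Rightarrow> real^4 \<Rightarrow> complex" where
  "DH n t = (\<Sum>k\<in>latH_star n.
      cis (pi / 2 * (\<Sum>j\<in>UNIV. real_of_int (k $ j) * t $ j)))"

end

theory Submission
  imports Defs
begin

text \<open>Each factor of \<open>Theta n t\<close> is the kernel \<open>sin (pi n x) / sin (pi x)\<close>, which equals
  the sum of \<open>exp (i pi l x)\<close> over \<open>l = -(n-1), -(n-3), ..., n-1\<close>; hence \<open>Theta n t\<close>
  is an exponential sum over the cube \<open>B n\<close> of such integer vectors. The cube
  \<open>B (n+1)\<close> is the disjoint union of \<open>B n - (1,1,1,1)\<close> and its top faces \<open>T n\<close>
  (some coordinate equal to \<open>n\<close>). Since \<open>t\<close> has coordinate sum 0, shifting all
  coordinates by a constant leaves the exponentials unchanged, so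
  \<open>Theta (n+1) t - Theta n t\<close> is the sum over \<open>T n\<close>. Finally \<open>l \<mapsto> 2 l - c (1,1,1,1)\<close>,
  with \<open>c\<close> chosen to make the coordinate sum vanish, maps \<open>T n\<close> bijectively onto
  \<open>latH_star n\<close>, and once more the constant shift is invisible.\<close>

definition sin_quot_freqs :: "nat \<Rightarrow> int set" where
  "sin_quot_freqs n = {l. \<bar>l\<bar> \<le> int n - 1 \<and> even (l + int n - 1)}"

lemma finite_sin_quot_freqs [simp]: "finite (sin_quot_freqs n)"
  by (rule finite_subset[of _ "{-int n..int n}"]) (auto simp: sin_quot_freqs_def)

lemma sin_quot_freqs_0 [simp]: "sin_quot_freqs 0 = {}"
  and sin_quot_freqs_1 [simp]: "sin_quot_freqs (Suc 0) = {0}"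
  by (auto simp: sin_quot_freqs_def)

lemma sin_quot_freqs_add_2:
  "sin_quot_freqs (n + 2) = insert (int n + 1) (insert (- int n - 1) (sin_quot_freqs n))"
  by (auto simp: sin_quot_freqs_def) presburger+

lemma mem_sin_quot_freqs_Suc:
  "l \<in> sin_quot_freqs (Suc n) \<longleftrightarrow> l = int n \<or> l + 1 \<in> sin_quot_freqs n"
  unfolding sin_quot_freqs_def by simp presburger

lemma sin_quot_freqs_less: "l \<in> sin_quot_freqs n \<Longrightarrow> l < int n"
  unfolding sin_quot_freqs_def by auto

lemma uminus_sin_quot_freqs: "uminus ` sin_quot_freqs n = sin_quot_freqs n"
proof -
  have "- l \<in> sin_quot_freqs n" if "l \<in> sin_quot_freqs n" for l
    using that unfolding sin_quot_freqs_def by simp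
  then show ?thesis by (auto intro: image_eqI[of _ _ "- _"])
qed

lemma sin_mult_cos_sum:
  "sin (pi * x) * (\<Sum>l\<in>sin_quot_freqs n. cos (pi * l * x)) = sin (pi * n * x)"
proof (induction n rule: nat_induct2)
  case (step n)
  have "int n + 1 \<notin> sin_quot_freqs n" "- int n - 1 \<notin> sin_quot_freqs n"
    by (auto simp: sin_quot_freqs_def)
  moreover have "cos (pi * real_of_int (- int n - 1) * x) = cos (pi * (n + 1) * x)"
  proof -
    have "pi * real_of_int (- int n - 1) * x = - (pi * (n + 1) * x)"
      by (simp add: algebra_simps)
    then show ?thesis
      by (simp only: cos_minus)
  qed
  ultimately have "(\<Sum>l\<in>sin_quot_freqs (n + 2). cos (pi * l * x))
      = (\<Sum>l\<in>sin_quot_freqs n. cos (pi * l * x)) + 2 * cos (pi * (n + 1) * x)"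
    unfolding sin_quot_freqs_add_2 by (simp add: add.commute)
  moreover have "sin (pi * x) * (2 * cos (pi * (n + 1) * x))
      = sin (pi * (n + 1) * x + pi * x) - sin (pi * (n + 1) * x - pi * x)"
    by (simp add: sin_add sin_diff)
  ultimately show ?case
    using step by (simp add: algebra_simps)
qed simp_all

lemma sin_pi_quot_eq_cos_sum:
  assumes "sin (pi * x) \<noteq> 0"
  shows "sin (pi * n * x) / sin (pi * x) = (\<Sum>l\<in>sin_quot_freqs n. cos (pi * l * x))"
  using assms by (metis nonzero_mult_div_cancel_left sin_mult_cos_sum)

lemma eventually_sin_pi_nonzero_at_int:
  "eventually (\<lambda>s. sin (pi * s) \<noteq> 0) (at (of_int m))"
proof -
  have "sin (pi * s) \<noteq> 0" if "s \<noteq> of_int m" "dist s (of_int m) < 1" for s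
  proof
    assume "sin (pi * s) = 0"
    then obtain i :: int where "s = of_int i"
      using sin_zero_iff_int2[of "pi * s"] by auto
    with that show False
      by (auto simp: dist_real_def simp flip: of_int_diff)
  qed
  then show ?thesis
    unfolding eventually_at by (intro exI[of _ 1]) auto
qed

lemma sin_quot_eq_cos_sum:
  "sin_quot n x = (\<Sum>l\<in>sin_quot_freqs n. cos (pi * l * x))" (is "_ = ?C x")
proof (cases "sin (pi * x) = 0")
  case False
  then show ?thesis
    unfolding sin_quot_def by (simp add: sin_pi_quot_eq_cos_sum)
next
  case True
  then obtain m :: int where x: "x = of_int m"
    using sin_zero_iff_int2[of "pi * x"] by auto
  have "eventually (\<lambda>s. ?C s = sin (pi * n * s) / sin (pi * s)) (at x)"
    using eventually_sin_pi_nonzero_at_int[of m, folded x]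
    by (rule eventually_mono) (simp add: sin_pi_quot_eq_cos_sum)
  moreover have "isCont ?C x"
    by (intro continuous_intros)
  ultimately have "((\<lambda>s. sin (pi * n * s) / sin (pi * s)) \<longlongrightarrow> ?C x) (at x)"
    unfolding isCont_def by (rule Lim_transform_eventually[rotated])
  with True show ?thesis
    unfolding sin_quot_def by (simp add: tendsto_Lim)
qed

lemma sin_quot_eq_cis_sum:
  "complex_of_real (sin_quot n x) = (\<Sum>l\<in>sin_quot_freqs n. cis (pi * l * x))"
proof -
  have "(\<Sum>l\<in>sin_quot_freqs n. sin (pi * l * x))
      = (\<Sum>l\<in>uminus ` sin_quot_freqs n. sin (pi * l * x))"
    by (simp only: uminus_sin_quot_freqs)
  also have "\<dots> = - (\<Sum>l\<in>sin_quot_freqs n. sin (pi * l * x))"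
    by (subst sum.reindex) (auto simp: inj_on_def sum_negf)
  finally have "(\<Sum>l\<in>sin_quot_freqs n. sin (pi * l * x)) = 0"
    by simp
  then show ?thesis
    by (simp add: complex_eq_iff Re_sum Im_sum sin_quot_eq_cos_sum)
qed

lemma prod_cis: "(\<Prod>i\<in>A. cis (f i)) = cis (\<Sum>i\<in>A. f i)"
  by (induction A rule: infinite_finite_induct) (simp_all add: cis_mult)

definition int_inner :: "int^'d \<Rightarrow> real^'d \<Rightarrow> real" where
  "int_inner k t = (\<Sum>j\<in>UNIV. real_of_int (k $ j) * t $ j)"

lemma int_inner_add_const:
  assumes "(\<Sum>j\<in>UNIV. t $ j) = 0"
  shows "int_inner (\<chi> j. k $ j + c) t = int_inner k t"
proof -
  have "int_inner (\<chi> j. k $ j + c) t = int_inner k t + of_int c * (\<Sum>j\<in>UNIV. t $ j)"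
    by (simp add: int_inner_def algebra_simps sum.distrib sum_distrib_left)
  with assms show ?thesis
    by simp
qed

lemma int_inner_scale: "int_inner (\<chi> j. c * k $ j) t = of_int c * int_inner k t"
  by (simp add: int_inner_def sum_distrib_left algebra_simps)

definition freq_box :: "nat \<Rightarrow> (int^'d) set" where
  "freq_box n = {l. \<forall>j. l $ j \<in> sin_quot_freqs n}"

definition top_face :: "nat \<Rightarrow> (int^'d) set" where
  "top_face n = {l \<in> freq_box (Suc n). \<exists>j. l $ j = int n}"

lemma bij_betw_vec_nth_freq_box:
  "bij_betw vec_nth (freq_box n) (PiE UNIV (\<lambda>_. sin_quot_freqs n))"
  by (rule bij_betwI[of _ _ _ vec_lambda]) (auto simp: freq_box_def PiE_iff)

lemma finite_freq_box [simp]: "finite (freq_box n)"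
  using bij_betw_finite[OF bij_betw_vec_nth_freq_box] by (simp add: finite_PiE)

lemma prod_sin_quot_eq_sum_cis:
  fixes t :: "real^'d"
  shows "complex_of_real (\<Prod>j\<in>UNIV. sin_quot n (t $ j))
    = (\<Sum>l\<in>freq_box n. cis (pi * int_inner l t))"
proof -
  have "complex_of_real (\<Prod>j\<in>UNIV. sin_quot n (t $ j))
      = (\<Prod>j\<in>UNIV. \<Sum>l\<in>sin_quot_freqs n. cis (pi * l * t $ j))"
    by (simp add: sin_quot_eq_cis_sum)
  also have "\<dots> = (\<Sum>g\<in>PiE UNIV (\<lambda>_. sin_quot_freqs n). \<Prod>j\<in>UNIV. cis (pi * g j * t $ j))"
    by (simp add: prod_sum_PiE)
  also have "\<dots> = (\<Sum>l\<in>freq_box n. \<Prod>j\<in>UNIV. cis (pi * l $ j * t $ j))"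
    by (simp add: sum.reindex_bij_betw[OF bij_betw_vec_nth_freq_box, symmetric])
  also have "\<dots> = (\<Sum>l\<in>freq_box n. cis (pi * int_inner l t))"
    by (simp add: prod_cis int_inner_def sum_distrib_left mult.assoc)
  finally show ?thesis .
qed

lemma freq_box_Suc:
  "freq_box (Suc n) = (\<lambda>l. l - 1) ` freq_box n \<union> top_face n"
proof (intro equalityI subsetI)
  fix l :: "int^'d"
  assume l: "l \<in> freq_box (Suc n)"
  show "l \<in> (\<lambda>l. l - 1) ` freq_box n \<union> top_face n"
  proof (cases "l \<in> top_face n")
    case False
    with l have "l + 1 \<in> freq_box n"
      by (auto simp: top_face_def freq_box_def mem_sin_quot_freqs_Suc)
    then show ?thesis
      by (auto intro: image_eqI[of _ _ "l + 1"])
  qed simp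
qed (auto simp: top_face_def freq_box_def mem_sin_quot_freqs_Suc)

lemma top_face_disjoint: "(\<lambda>l. l - 1) ` freq_box n \<inter> top_face n = {}"
proof -
  have "l $ j - 1 \<noteq> int n" if "l \<in> freq_box n" for l :: "int^'d" and j
    using sin_quot_freqs_less[of "l $ j" n] that by (simp add: freq_box_def)
  then show ?thesis
    by (fastforce simp: top_face_def)
qed

lemma finite_top_face [simp]: "finite (top_face n)"
  by (simp add: top_face_def)

lemma prod_sin_quot_Suc_diff:
  fixes t :: "real^'d"
  assumes "(\<Sum>j\<in>UNIV. t $ j) = 0"
  shows "complex_of_real ((\<Prod>j\<in>UNIV. sin_quot (Suc n) (t $ j)) - (\<Prod>j\<in>UNIV. sin_quot n (t $ j)))
    = (\<Sum>l\<in>top_face n. cis (pi * int_inner l t))"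
proof -
  let ?e = "\<lambda>l. cis (pi * int_inner l t)"
  have shift_invariant: "?e (l - 1) = ?e l" for l :: "int^'d"
  proof -
    have "l - 1 = (\<chi> j. l $ j + - 1)"
      by (simp add: vec_eq_iff)
    then show ?thesis
      by (simp only: int_inner_add_const[OF assms])
  qed
  have "(\<Sum>l\<in>freq_box (Suc n). ?e l) = (\<Sum>l\<in>(\<lambda>l. l - 1) ` freq_box n. ?e l) + (\<Sum>l\<in>top_face n. ?e l)"
    unfolding freq_box_Suc by (rule sum.union_disjoint) (simp_all add: top_face_disjoint)
  also have "(\<Sum>l\<in>(\<lambda>l. l - 1) ` freq_box n. ?e l) = (\<Sum>l\<in>freq_box n. ?e l)"
    by (rule sum.reindex_cong[of "\<lambda>l. l - 1"]) (auto simp: inj_on_def shift_invariant)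
  finally show ?thesis
    unfolding of_real_diff prod_sin_quot_eq_sum_cis by simp
qed

definition max_coord :: "int^'d \<Rightarrow> int" where
  "max_coord k = Max (range (vec_nth k))"

lemma max_coord_ge: "k $ j \<le> max_coord k"
  unfolding max_coord_def by (rule Max_ge) auto

lemma max_coord_attained: "\<exists>j. k $ j = max_coord k"
proof -
  have "max_coord k \<in> range (vec_nth k)"
    unfolding max_coord_def by (rule Max_in) auto
  then show ?thesis
    by auto
qed

lemma max_coord_eqI: "(\<And>j. k $ j \<le> m) \<Longrightarrow> k $ i = m \<Longrightarrow> max_coord k = m"
  by (metis max_coord_attained max_coord_ge order_antisym)

definition lattice_to_face :: "nat \<Rightarrow> int^'d \<Rightarrow> int^'d" where
  "lattice_to_face n k = (\<chi> j. (k $ j - max_coord k) div 2 + int n)"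

definition face_to_lattice :: "int^4 \<Rightarrow> int^4" where
  "face_to_lattice l = (\<chi> j. 2 * l $ j - (\<Sum>i\<in>UNIV. l $ i) div 2)"

lemma latH_star_coord:
  assumes "k \<in> latH_star n"
  shows "4 dvd max_coord k - k $ j" "max_coord k - k $ j \<le> 4 * int n"
proof -
  obtain i where i: "k $ i = max_coord k"
    using max_coord_attained by blast
  with assms show "4 dvd max_coord k - k $ j" "max_coord k - k $ j \<le> 4 * int n"
    unfolding latH_star_def latH_def by (auto simp: mod_eq_dvd_iff simp flip: i)
qed

lemma lattice_to_face_nth:
  assumes "k \<in> latH_star n"
  shows "2 * lattice_to_face n k $ j = k $ j - max_coord k + 2 * int n"
  using latH_star_coord(1)[OF assms, of j] unfolding lattice_to_face_def by simp presburger

lemma lattice_to_face_in_top_face: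
  assumes "k \<in> latH_star n"
  shows "lattice_to_face n k \<in> top_face n"
proof -
  have "lattice_to_face n k $ j \<in> sin_quot_freqs (Suc n)" for j
    using latH_star_coord[OF assms, of j] max_coord_ge[of k j]
    unfolding lattice_to_face_def sin_quot_freqs_def by simp presburger
  moreover obtain i where "k $ i = max_coord k"
    using max_coord_attained by blast
  then have "lattice_to_face n k $ i = int n"
    by (simp add: lattice_to_face_def)
  ultimately show ?thesis
    by (auto simp: top_face_def freq_box_def)
qed

lemma top_face_coord:
  assumes "l \<in> top_face n"
  shows "\<bar>l $ j\<bar> \<le> int n" "even (l $ j + int n)"
  using assms by (auto simp: top_face_def freq_box_def sin_quot_freqs_def)

lemma top_face_even_sum:
  fixes l :: "int^4"
  assumes "l \<in> top_face n"
  shows "even (\<Sum>i\<in>UNIV. l $ i)"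
proof -
  have "even (\<Sum>i\<in>UNIV. l $ i + int n)"
    using top_face_coord(2)[OF assms] by (simp add: sum_4)
  then show ?thesis
    by (simp add: sum.distrib)
qed

lemma face_to_lattice_in_latH_star:
  assumes "l \<in> top_face n"
  shows "face_to_lattice l \<in> latH_star n"
proof -
  define s where "s = (\<Sum>i\<in>UNIV. l $ i)"
  have nth: "face_to_lattice l $ j = 2 * l $ j - s div 2" for j
    by (simp add: face_to_lattice_def s_def)
  have "(\<Sum>j\<in>UNIV. face_to_lattice l $ j) = 2 * s - 4 * (s div 2)"
    unfolding nth by (simp add: sum_4 s_def algebra_simps)
  also have "\<dots> = 0"
    using top_face_even_sum[OF assms] by (simp add: s_def)
  finally have "(\<Sum>j\<in>UNIV. face_to_lattice l $ j) = 0" .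
  moreover have "face_to_lattice l $ i mod 4 = face_to_lattice l $ j mod 4" for i j
    using top_face_coord(2)[OF assms, of i] top_face_coord(2)[OF assms, of j]
    unfolding nth by presburger
  moreover have "- 4 * int n \<le> face_to_lattice l $ i - face_to_lattice l $ j"
    "face_to_lattice l $ i - face_to_lattice l $ j \<le> 4 * int n" for i j
    using top_face_coord(1)[OF assms, of i] top_face_coord(1)[OF assms, of j]
    unfolding nth by auto
  ultimately show ?thesis
    unfolding latH_star_def latH_def by auto
qed

lemma lattice_to_face_inverse:
  assumes "l \<in> top_face n"
  shows "lattice_to_face n (face_to_lattice l) = l"
proof -
  define s where "s = (\<Sum>i\<in>UNIV. l $ i)"
  have nth: "face_to_lattice l $ j = 2 * l $ j - s div 2" for j
    by (simp add: face_to_lattice_def s_def)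
  obtain i where "l $ i = int n"
    using assms by (auto simp: top_face_def)
  then have "max_coord (face_to_lattice l) = 2 * int n - s div 2"
    using top_face_coord(1)[OF assms] by (intro max_coord_eqI[of _ _ i]) (auto simp: nth abs_le_iff)
  then show ?thesis
    by (simp add: lattice_to_face_def vec_eq_iff nth)
qed

lemma face_to_lattice_inverse:
  assumes "k \<in> latH_star n"
  shows "face_to_lattice (lattice_to_face n k) = k"
proof -
  have "2 * (\<Sum>j\<in>UNIV. lattice_to_face n k $ j) = (\<Sum>j\<in>UNIV. k $ j) - 4 * max_coord k + 8 * int n"
    by (simp add: sum_distrib_left lattice_to_face_nth[OF assms] sum_4)
  also have "(\<Sum>j\<in>UNIV. k $ j) = 0"
    using assms by (simp add: latH_star_def latH_def)
  finally have "(\<Sum>j\<in>UNIV. lattice_to_face n k $ j) div 2 = 2 * int n - max_coord k"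
    by simp
  then show ?thesis
    by (simp add: face_to_lattice_def vec_eq_iff lattice_to_face_nth[OF assms])
qed

lemma bij_betw_face_to_lattice: "bij_betw face_to_lattice (top_face n) (latH_star n)"
  by (rule bij_betwI[of _ _ _ "lattice_to_face n"])
    (simp_all add: face_to_lattice_in_latH_star lattice_to_face_in_top_face
      lattice_to_face_inverse face_to_lattice_inverse)

lemma sum_latH_star_eq_sum_top_face:
  assumes "(\<Sum>j\<in>UNIV. t $ j) = 0"
  shows "(\<Sum>k\<in>latH_star n. cis (pi / 2 * int_inner k t))
    = (\<Sum>l\<in>top_face n. cis (pi * int_inner l t))"
proof -
  have "int_inner (face_to_lattice l) t = 2 * int_inner l t" for l
  proof -
    have "face_to_lattice l = (\<chi> j. (\<chi> j. 2 * l $ j) $ j + - ((\<Sum>i\<in>UNIV. l $ i) div 2))"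
      by (simp add: face_to_lattice_def)
    then show ?thesis
      by (simp only: int_inner_add_const[OF assms] int_inner_scale)
  qed
  then show ?thesis
    by (simp add: sum.reindex_bij_betw[OF bij_betw_face_to_lattice, symmetric])
qed

theorem theorem3p10:
  fixes n :: nat and t :: "real^4"
  assumes "(\<Sum>j\<in>UNIV. t $ j) = 0"
  shows "DH n t = complex_of_real (Theta (n + 1) t - Theta n t)"
proof -
  have "DH n t = (\<Sum>k\<in>latH_star n. cis (pi / 2 * int_inner k t))"
    by (simp add: DH_def int_inner_def)
  also have "\<dots> = (\<Sum>l\<in>top_face n. cis (pi * int_inner l t))"
    using assms by (rule sum_latH_star_eq_sum_top_face)
  also have "\<dots> = complex_of_real (Theta (n + 1) t - Theta n t)"
    using prod_sin_quot_Suc_diff[OF assms] by (simp add: Theta_def)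
  finally show ?thesis .
qed

end
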